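(* Let $\mathsf V$ be a quantale in which $k=\top$ is the top element, $X=(X,a)$ a $\mathsf V$-category, $s=(x_n)_{n\in\mathbb N}$ a Cauchy sequence in $X$ and $x\in X$ such that $s$ converges to $x$. Then $x^*=\psi_s$, i.e. $a(y,x)=\bigvee_N\bigwedge_{n\ge N}a(y,x_n)$ for all $y\in X$.
   Context: A quantale $(\mathsf V,\otimes,k)$ is a complete anti-symmetric lattice with an associative, commutative operation $\otimes$ with neutral element $k$ distributing over arbitrary suprema. A $\mathsf V$-category $(X,a)$ is a set with $a:X\times X\to\mathsf V$ such that $k\le a(x,x)$ and $a(x,y)\otimes a(y,z)\le a(x,z)$. A sequence $s=(x_n)$ is Cauchy if $k\le\bigvee_N\bigwedge_{n,m\ge N}a(x_n,x_m)$; $\psi_s(y)=\bigvee_N\bigwedge_{n\ge N}a(y,x_n)$. For $M\subseteq X$, $\overline M=\{z\in X\mid k\le\bigvee_{y\in M}a(z,y)\otimes a(y,z)\}$; $s$ converges to $x$ if $x\in\overline{\{x_n\mid n\in M\}}$ for every infinite $M\subseteq\mathbb N$. *)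

theory Defs
  imports Main
begin

definition quantale :: "('v::complete_lattice \<Rightarrow> 'v \<Rightarrow> 'v) \<Rightarrow> 'v \<Rightarrow> bool" where
  "quantale tensor k \<longleftrightarrow>
     (\<forall>u v w. tensor (tensor u v) w = tensor u (tensor v w)) \<and>
     (\<forall>u v. tensor u v = tensor v u) \<and>
     (\<forall>u. tensor k u = u) \<and>
     (\<forall>u S. tensor u (Sup S) = Sup ((\<lambda>v. tensor u v) ` S))"

definition vcat :: "('v::complete_lattice \<Rightarrow> 'v \<Rightarrow> 'v) \<Rightarrow> 'v \<Rightarrow> 'x set \<Rightarrow> ('x \<Rightarrow> 'x \<Rightarrow> 'v) \<Rightarrow> bool" where
  "vcat tensor k X a \<longleftrightarrow>
     (\<forall>x\<in>X. k \<le> a x x) \<and>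
     (\<forall>x\<in>X. \<forall>y\<in>X. \<forall>z\<in>X. tensor (a x y) (a y z) \<le> a x z)"

definition cauchy_seq_V :: "'v::complete_lattice \<Rightarrow> ('x \<Rightarrow> 'x \<Rightarrow> 'v) \<Rightarrow> (nat \<Rightarrow> 'x) \<Rightarrow> bool" where
  "cauchy_seq_V k a s \<longleftrightarrow> k \<le> (SUP N. INF n\<in>{N..}. INF m\<in>{N..}. a (s n) (s m))"

definition psi_seq :: "('x \<Rightarrow> 'x \<Rightarrow> 'v::complete_lattice) \<Rightarrow> (nat \<Rightarrow> 'x) \<Rightarrow> 'x \<Rightarrow> 'v" where
  "psi_seq a s y = (SUP N. INF n\<in>{N..}. a y (s n))"

definition vclosure :: "('v::complete_lattice \<Rightarrow> 'v \<Rightarrow> 'v) \<Rightarrow> 'v \<Rightarrow> 'x set \<Rightarrow> ('x \<Rightarrow> 'x \<Rightarrow> 'v) \<Rightarrow> 'x set \<Rightarrow> 'x set" where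
  "vclosure tensor k X a M = {z\<in>X. k \<le> (SUP y\<in>M. tensor (a z y) (a y z))}"

definition converges_V :: "('v::complete_lattice \<Rightarrow> 'v \<Rightarrow> 'v) \<Rightarrow> 'v \<Rightarrow> 'x set \<Rightarrow> ('x \<Rightarrow> 'x \<Rightarrow> 'v) \<Rightarrow> (nat \<Rightarrow> 'x) \<Rightarrow> 'x \<Rightarrow> bool" where
  "converges_V tensor k X a s x \<longleftrightarrow>
     (\<forall>M::nat set. infinite M \<longrightarrow> x \<in> vclosure tensor k X a (s ` M))"

end

theory Submission
  imports Defs
begin

text \<open>Since \<open>k = top\<close>, a tensor product lies below both factors, so convergence gives
  \<open>top \<le> (SUP m\<ge>N. a x (s m))\<close> and \<open>top \<le> (SUP m\<ge>N. a (s m) x)\<close> for every \<open>N\<close>.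
  Tensoring \<open>INF n\<ge>N. a y (s n)\<close> with the second supremum and using transitivity
  gives \<open>psi_seq a s y \<le> a y x\<close>. Conversely, tensoring \<open>a y x\<close> with the Cauchy bound
  \<open>INF n,m\<ge>N. a (s n) (s m)\<close> and with the first supremum, the composite
  \<open>a y x \<otimes> a x (s m) \<otimes> a (s m) (s n) \<le> a y (s n)\<close> gives \<open>a y x \<le> psi_seq a s y\<close>.\<close>

locale integral_quantale =
  fixes tensor :: "'v::complete_lattice \<Rightarrow> 'v \<Rightarrow> 'v"  (infixl "\<otimes>" 70)
  assumes quantale: "quantale tensor top"
begin

lemma tensor_assoc: "u \<otimes> v \<otimes> w = u \<otimes> (v \<otimes> w)"
  and tensor_commute: "u \<otimes> v = v \<otimes> u"
  and top_tensor [simp]: "top \<otimes> u = u"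
  and tensor_Sup: "u \<otimes> Sup S = Sup ((\<otimes>) u ` S)"
  using quantale unfolding quantale_def by auto

lemma tensor_top [simp]: "u \<otimes> top = u"
  by (metis tensor_commute top_tensor)

lemma tensor_SUP: "u \<otimes> (SUP i\<in>I. f i) = (SUP i\<in>I. u \<otimes> f i)"
  by (simp add: tensor_Sup image_image)

lemma tensor_mono_right: "v \<le> w \<Longrightarrow> u \<otimes> v \<le> u \<otimes> w"
  using tensor_Sup[of u "{v, w}"] by (simp add: sup.absorb2 le_iff_sup)

lemma tensor_mono: "u \<le> u' \<Longrightarrow> v \<le> v' \<Longrightarrow> u \<otimes> v \<le> u' \<otimes> v'"
  by (metis tensor_commute tensor_mono_right order_trans)

lemma tensor_le_left: "u \<otimes> v \<le> u"
  using tensor_mono_right[of v top u] by simp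

lemma tensor_le_right: "u \<otimes> v \<le> v"
  using tensor_le_left by (metis tensor_commute)

lemma le_SUP_tensor:
  assumes "top \<le> (SUP i\<in>I. f i)"
  shows "u \<le> (SUP i\<in>I. u \<otimes> f i)"
proof -
  have "u = u \<otimes> top" by simp
  also have "\<dots> \<le> u \<otimes> (SUP i\<in>I. f i)" using assms by (rule tensor_mono_right)
  finally show ?thesis by (simp only: tensor_SUP)
qed

lemma converges_V_tail:
  assumes "converges_V tensor top X a s x"
  shows "top \<le> (SUP m\<in>{N..}. a x (s m) \<otimes> a (s m) x)"
proof -
  have "x \<in> vclosure tensor top X a (s ` {N..})"
    using assms infinite_Ici unfolding converges_V_def by blast
  then show ?thesis unfolding vclosure_def by (simp add: image_image)
qed

lemma converges_V_tail_from:
  assumes "converges_V tensor top X a s x"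
  shows "top \<le> (SUP m\<in>{N..}. a x (s m))"
  using converges_V_tail[OF assms, of N] by (rule order_trans) (intro SUP_subset_mono order_refl tensor_le_left)

lemma converges_V_tail_to:
  assumes "converges_V tensor top X a s x"
  shows "top \<le> (SUP m\<in>{N..}. a (s m) x)"
  using converges_V_tail[OF assms, of N] by (rule order_trans) (intro SUP_subset_mono order_refl tensor_le_right)

lemma vcat_trans:
  "vcat tensor top X a \<Longrightarrow> p \<in> X \<Longrightarrow> q \<in> X \<Longrightarrow> r \<in> X \<Longrightarrow> a p q \<otimes> a q r \<le> a p r"
  unfolding vcat_def by blast

lemma psi_seq_le:
  assumes cat: "vcat tensor top X a" and sX: "\<And>n. s n \<in> X" and "x \<in> X" "y \<in> X"
    and tail: "\<And>N. top \<le> (SUP m\<in>{N..}. a (s m) x)"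
  shows "psi_seq a s y \<le> a y x"
  unfolding psi_seq_def
proof (rule SUP_least)
  fix N
  let ?d = "INF n\<in>{N..}. a y (s n)"
  have "?d \<le> (SUP m\<in>{N..}. ?d \<otimes> a (s m) x)" using tail by (rule le_SUP_tensor)
  also have "\<dots> \<le> a y x"
  proof (rule SUP_least)
    fix m assume "m \<in> {N..}"
    then have "?d \<otimes> a (s m) x \<le> a y (s m) \<otimes> a (s m) x"
      by (intro tensor_mono INF_lower order_refl)
    also have "\<dots> \<le> a y x" using vcat_trans[OF cat] sX \<open>x \<in> X\<close> \<open>y \<in> X\<close> by blast
    finally show "?d \<otimes> a (s m) x \<le> a y x" .
  qed
  finally show "?d \<le> a y x" .
qed

lemma le_psi_seq:
  assumes cat: "vcat tensor top X a" and sX: "\<And>n. s n \<in> X" and "x \<in> X" "y \<in> X"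
    and cauchy: "cauchy_seq_V top a s"
    and tail: "\<And>N. top \<le> (SUP m\<in>{N..}. a x (s m))"
  shows "a y x \<le> psi_seq a s y"
proof -
  define c where "c N = (INF n\<in>{N..}. INF m\<in>{N..}. a (s n) (s m))" for N
  have "a y x \<le> (SUP N. a y x \<otimes> c N)"
    using cauchy unfolding cauchy_seq_V_def c_def by (rule le_SUP_tensor)
  also have "\<dots> \<le> psi_seq a s y"
    unfolding psi_seq_def
  proof (rule SUP_mono)
    fix N
    have "a y x \<otimes> c N \<le> (SUP m\<in>{N..}. a y x \<otimes> c N \<otimes> a x (s m))"
      using tail by (rule le_SUP_tensor)
    also have "\<dots> \<le> (INF n\<in>{N..}. a y (s n))"
    proof (intro SUP_least INF_greatest)
      fix m n assume m: "m \<in> {N..}" and n: "n \<in> {N..}"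
      have "a y x \<otimes> c N \<otimes> a x (s m) = a y x \<otimes> a x (s m) \<otimes> c N"
        by (metis tensor_assoc tensor_commute)
      also have "\<dots> \<le> a y (s m) \<otimes> a (s m) (s n)"
        using m n vcat_trans[OF cat] sX \<open>x \<in> X\<close> \<open>y \<in> X\<close>
        unfolding c_def by (intro tensor_mono INF_lower2[of m] INF_lower) auto
      also have "\<dots> \<le> a y (s n)" using vcat_trans[OF cat] sX \<open>y \<in> X\<close> by blast
      finally show "a y x \<otimes> c N \<otimes> a x (s m) \<le> a y (s n)" .
    qed
    finally show "\<exists>N'\<in>UNIV. a y x \<otimes> c N \<le> (INF n\<in>{N'..}. a y (s n))" by blast
  qed
  finally show ?thesis .
qed

end

theorem corollary3p18:
  fixes tensor :: "'v::complete_lattice \<Rightarrow> 'v \<Rightarrow> 'v" and k :: 'v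
    and X :: "'x set" and a :: "'x \<Rightarrow> 'x \<Rightarrow> 'v" and s :: "nat \<Rightarrow> 'x" and x :: 'x
  assumes "quantale tensor k"
    and "k = top"
    and "vcat tensor k X a"
    and "\<forall>n. s n \<in> X"
    and "cauchy_seq_V k a s"
    and "x \<in> X"
    and "converges_V tensor k X a s x"
  shows "\<forall>y\<in>X. a y x = psi_seq a s y"
proof
  fix y assume "y \<in> X"
  interpret integral_quantale tensor
    using assms(1,2) by unfold_locales simp
  note hyps = assms(3,5,7)[unfolded assms(2)]
  show "a y x = psi_seq a s y"
  proof (rule antisym)
    show "a y x \<le> psi_seq a s y"
      using le_psi_seq[OF hyps(1)] assms(4,6) \<open>y \<in> X\<close> hyps(2) converges_V_tail_from[OF hyps(3)]
      by blast
    show "psi_seq a s y \<le> a y x"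
      using psi_seq_le[OF hyps(1)] assms(4,6) \<open>y \<in> X\<close> converges_V_tail_to[OF hyps(3)]
      by blast
  qed
qed

end
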